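(* Consider a glass (a nonequilibrium state of the system) in internal equilibrium, relaxing at fixed temperature $T_0$ and pressure $P_0$ of the medium toward the equilibrium supercooled liquid. Then during relaxation $S>S_{\text{SCL}}$, and the entropy varies in time with a unique direction: $dS(t)/dt<0$ for every nonequilibrium state during relaxation, so that $S(T_0,P_0,t)$ approaches $S_{\text{SCL}}(T_0,P_0)$ from above.
   Context: The system $\Sigma$ is in contact with a large equilibrium medium at fixed $T_0,P_0$. The system is in internal equilibrium: its entropy $S(E,V,\boldsymbol{\xi})$ is a state function of energy $E$, volume $V$ and internal variables $\boldsymbol{\xi}$, with instantaneous temperature $T(t)$, pressure $P(t)$ and affinity $\mathbf{A}(t)$ defined by $\partial S/\partial E=1/T$, $\partial S/\partial V=P/T$, $\partial S/\partial\boldsymbol{\xi}=\mathbf{A}/T$. The second law requires $d_{\text{i}}S\ge0$, and since $dS,d_{\text{e}}S,dV,d\boldsymbol{\xi}$ are independent, it yields $[T_0-T(t)]dS(t)\ge0$ (strictly for a nonequilibrium state). During relaxation at fixed medium temperature the system's temperature satisfies $T(t)>T_0$, approaching $T_0$ from above. $S_{\text{SCL}}(T_0,P_0)$ is the equilibrium supercooled-liquid entropy at the medium's $T_0,P_0$. *)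

theory Defs
  imports Complex_Main
begin

end

theory Submission
  imports Defs
begin

text \<open>The second law forces the sign of dS/dt opposite to that of T - T0, so the entropy
  strictly decreases along the whole relaxation. A strictly decreasing function that
  converges stays strictly above its limit, since it keeps dropping past every time.\<close>

lemma DERIV_neg_imp_strict_decreasing_on_atLeast:
  fixes f f' :: "real \<Rightarrow> real"
  assumes "\<And>t. t \<ge> t0 \<Longrightarrow> (f has_real_derivative f' t) (at t)"
    and "\<And>t. t \<ge> t0 \<Longrightarrow> f' t < 0"
    and "t0 \<le> a" and "a < b"
  shows "f b < f a"
proof (rule DERIV_neg_imp_decreasing[OF \<open>a < b\<close>])
  fix x assume "a \<le> x" "x \<le> b"
  with \<open>t0 \<le> a\<close> have "x \<ge> t0" by simp
  then show "\<exists>y. (f has_real_derivative y) (at x) \<and> y < 0"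
    using assms(1,2) by blast
qed

lemma strict_decreasing_gt_limit:
  fixes f :: "real \<Rightarrow> 'a::linorder_topology"
  assumes dec: "\<And>a b. t0 \<le> a \<Longrightarrow> a < b \<Longrightarrow> f b < f a"
    and lim: "(f \<longlongrightarrow> L) at_top"
    and "t0 \<le> t"
  shows "L < f t"
proof -
  have "eventually (\<lambda>x. f x \<le> f (t + 1)) at_top"
    unfolding eventually_at_top_linorder
  proof (intro exI[of _ "t + 1"] allI impI)
    fix x assume "t + 1 \<le> x"
    then show "f x \<le> f (t + 1)"
      using dec[of "t + 1" x] \<open>t0 \<le> t\<close> by (cases "x = t + 1") (simp_all add: less_imp_le)
  qed
  then have "L \<le> f (t + 1)"
    by (rule tendsto_upperbound[OF lim]) simp
  also have "\<dots> < f t"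
    using dec[of t "t + 1"] \<open>t0 \<le> t\<close> by simp
  finally show ?thesis .
qed

theorem theorem3:
  fixes S T S' :: "real \<Rightarrow> real" and T0 S_SCL :: real
  assumes deriv: "\<And>t. t \<ge> 0 \<Longrightarrow> (S has_real_derivative S' t) (at t)"
    and hot: "\<And>t. t \<ge> 0 \<Longrightarrow> T t > T0"
    and second_law: "\<And>t. t \<ge> 0 \<Longrightarrow> (T0 - T t) * S' t > 0"
    and relax: "(S \<longlongrightarrow> S_SCL) at_top"
  shows "\<forall>t\<ge>0. S' t < 0 \<and> S t > S_SCL"
proof -
  have S'_neg: "S' t < 0" if "t \<ge> 0" for t
    using second_law[OF that] hot[OF that] by (simp add: zero_less_mult_iff)
  have S_dec: "S b < S a" if "0 \<le> a" "a < b" for a b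
    using deriv S'_neg that by (rule DERIV_neg_imp_strict_decreasing_on_atLeast)
  show ?thesis
    using S'_neg strict_decreasing_gt_limit[OF S_dec relax] by blast
qed

end
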